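(* Let $\Gamma\in\mathcal S$ with embedding $\varphi$, and let $\Gamma_1,\Gamma_2\subset\Gamma$ be disjoint connected subtrees. Then for at least one $k\in\{1,2\}$ the vector $w_k=\sum_{v\in\Gamma_k}\varphi(v)$ is of the form $E_a-\sum_{j\in J}E_j$ with $a\notin J$.
   Context: A plumbing tree is a finite tree $\Gamma$ each of whose vertices $v$ carries an integer decoration $d(v)$. $\Gamma$ is minimal if no vertex has decoration $-1$. For $n\ge 1$ let $(\mathbb Z^n,Q_n)$ be the lattice with basis $E_1,\dots,E_n$ and $Q_n(E_i,E_j)=-\delta_{ij}$, and let $K=\sum_{i=1}^n E_i$. A plumbing tree $\Gamma$ on $n$ vertices is a symplectic plumbing tree if there is a map $\varphi$ (an embedding) from its vertex set to $\mathbb Z^n$ such that: for distinct vertices $v_1,v_2$, $Q_n(\varphi(v_1),\varphi(v_2))$ is $1$ if they are adjacent and $0$ otherwise; $Q_n(\varphi(v),\varphi(v))=d(v)$ for every $v$; and $Q_n(\varphi(v),K)+Q_n(\varphi(v),\varphi(v))=-2$ for every $v$. $\mathcal S$ is the set of minimal, connected symplectic plumbing trees. *)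

theory Defs
  imports Main "HOL-Library.Function_Algebras"
begin

definition adj :: "'v set set \<Rightarrow> 'v \<Rightarrow> 'v \<Rightarrow> bool" where
  "adj Ed x y \<longleftrightarrow> x \<noteq> y \<and> {x, y} \<in> Ed"

definition simple_graph :: "'v set \<Rightarrow> 'v set set \<Rightarrow> bool" where
  "simple_graph V Ed \<longleftrightarrow> finite V \<and> (\<forall>e\<in>Ed. \<exists>x y. x \<in> V \<and> y \<in> V \<and> x \<noteq> y \<and> e = {x, y})"

definition connected_on :: "'v set set \<Rightarrow> 'v set \<Rightarrow> bool" where
  "connected_on Ed S \<longleftrightarrow> S \<noteq> {} \<and>
     (\<forall>x\<in>S. \<forall>y\<in>S. (x, y) \<in> {(a, b). a \<in> S \<and> b \<in> S \<and> adj Ed a b}\<^sup>*)"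

definition is_tree :: "'v set \<Rightarrow> 'v set set \<Rightarrow> bool" where
  "is_tree V Ed \<longleftrightarrow> simple_graph V Ed \<and> connected_on Ed V \<and> card Ed + 1 = card V"

definition connected_subtree :: "'v set \<Rightarrow> 'v set set \<Rightarrow> 'v set \<Rightarrow> bool" where
  "connected_subtree V Ed S \<longleftrightarrow> S \<subseteq> V \<and> connected_on Ed S"

text \<open>The lattice (Z^n, Q_n): vectors are functions nat => int supported in {0..<n};
  the basis vector E_i (i < n) is the indicator of i.\<close>
definition Qn :: "nat \<Rightarrow> (nat \<Rightarrow> int) \<Rightarrow> (nat \<Rightarrow> int) \<Rightarrow> int" where
  "Qn n x y = - (\<Sum>i<n. x i * y i)"

definition Ebas :: "nat \<Rightarrow> nat \<Rightarrow> int" where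
  "Ebas i = (\<lambda>j. if j = i then 1 else 0)"

definition Kvec :: "nat \<Rightarrow> nat \<Rightarrow> int" where
  "Kvec n = (\<Sum>i<n. Ebas i)"

definition in_Zn :: "nat \<Rightarrow> (nat \<Rightarrow> int) \<Rightarrow> bool" where
  "in_Zn n x \<longleftrightarrow> (\<forall>i\<ge>n. x i = 0)"

definition symplectic_embedding ::
  "'v set \<Rightarrow> 'v set set \<Rightarrow> ('v \<Rightarrow> int) \<Rightarrow> ('v \<Rightarrow> nat \<Rightarrow> int) \<Rightarrow> bool" where
  "symplectic_embedding V Ed d \<phi> \<longleftrightarrow>
     (let n = card V in
       (\<forall>v\<in>V. in_Zn n (\<phi> v)) \<and>
       (\<forall>v1\<in>V. \<forall>v2\<in>V. v1 \<noteq> v2 \<longrightarrow>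
           Qn n (\<phi> v1) (\<phi> v2) = (if adj Ed v1 v2 then 1 else 0)) \<and>
       (\<forall>v\<in>V. Qn n (\<phi> v) (\<phi> v) = d v) \<and>
       (\<forall>v\<in>V. Qn n (\<phi> v) (Kvec n) + Qn n (\<phi> v) (\<phi> v) = -2))"

definition minimal_plumbing :: "'v set \<Rightarrow> ('v \<Rightarrow> int) \<Rightarrow> bool" where
  "minimal_plumbing V d \<longleftrightarrow> (\<forall>v\<in>V. d v \<noteq> -1)"

definition in_class_S :: "'v set \<Rightarrow> 'v set set \<Rightarrow> ('v \<Rightarrow> int) \<Rightarrow> bool" where
  "in_class_S V Ed d \<longleftrightarrow> is_tree V Ed \<and> minimal_plumbing V d \<and>
     (\<exists>\<phi>. symplectic_embedding V Ed d \<phi>)"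

end

theory Submission
  imports Defs
begin

text \<open>Use the positive definite form \<open>dot = -Q\<^sub>n\<close>. The adjunction condition
  \<open>\<Sum>\<^sub>i x\<^sub>i (x\<^sub>i + 1) = 2\<close> forces every vertex vector to be either of the
  form \<open>E\<^sub>a - \<Sum>\<^sub>j\<^sub>\<in>\<^sub>J E\<^sub>j\<close> or non-positive in all coordinates (call both
  admissible). Adjacent vertices pair to \<open>-1\<close>, and a sum of two admissible vectors pairing
  to at most \<open>-1\<close> is again admissible, non-positive if one summand is; growing a connected
  set one neighbour at a time shows that \<open>w\<^sub>1\<close> and \<open>w\<^sub>2\<close> are admissible. If both were
  non-positive, grow \<open>\<Gamma>\<^sub>1\<close> inside the connected tree while avoiding \<open>\<Gamma>\<^sub>2\<close>: the sum stays
  non-positive until it becomes adjacent to \<open>\<Gamma>\<^sub>2\<close>, and then its pairing with \<open>w\<^sub>2\<close> is at most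
  \<open>-1\<close>, whereas two non-positive vectors pair non-negatively.\<close>

lemma sum_fun_apply:
  fixes f :: "'a \<Rightarrow> 'b \<Rightarrow> 'c::comm_monoid_add"
  shows "(\<Sum>v\<in>S. f v) i = (\<Sum>v\<in>S. f v i)"
  by (induction S rule: infinite_finite_induct) auto

lemma Kvec_apply: "Kvec n i = (if i < n then 1 else 0)"
  unfolding Kvec_def sum_fun_apply Ebas_def by simp

definition dot :: "nat \<Rightarrow> (nat \<Rightarrow> int) \<Rightarrow> (nat \<Rightarrow> int) \<Rightarrow> int" where
  "dot n x y = (\<Sum>i<n. x i * y i)"

lemma Qn_eq_uminus_dot: "Qn n x y = - dot n x y"
  unfolding Qn_def dot_def by simp

lemma dot_commute: "dot n x y = dot n y x"
  unfolding dot_def by (simp add: mult.commute)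

lemma dot_sum_left: "dot n (\<Sum>v\<in>S. f v) y = (\<Sum>v\<in>S. dot n (f v) y)"
  unfolding dot_def sum_fun_apply by (simp add: sum_distrib_right sum.swap[of _ S])

lemma dot_sum_right: "dot n x (\<Sum>v\<in>S. f v) = (\<Sum>v\<in>S. dot n x (f v))"
  using dot_sum_left[of n f S x] by (simp add: dot_commute)

lemma dot_Kvec: "dot n x (Kvec n) = (\<Sum>i<n. x i)"
  unfolding dot_def Kvec_apply by simp

definition nonpos :: "(nat \<Rightarrow> int) \<Rightarrow> bool" where
  "nonpos x \<longleftrightarrow> (\<forall>i. x i \<le> 0)"

definition single_one_at :: "(nat \<Rightarrow> int) \<Rightarrow> nat \<Rightarrow> bool" where
  "single_one_at x a \<longleftrightarrow> x a = 1 \<and> (\<forall>i. i \<noteq> a \<longrightarrow> x i = 0 \<or> x i = -1)"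

lemma single_one_at_nonpos_off: "single_one_at x a \<Longrightarrow> i \<noteq> a \<Longrightarrow> x i \<le> 0"
  unfolding single_one_at_def by fastforce

definition admissible :: "(nat \<Rightarrow> int) \<Rightarrow> bool" where
  "admissible x \<longleftrightarrow> nonpos x \<or> (\<exists>a. single_one_at x a)"

lemma single_one_at_Ebas_form:
  assumes "in_Zn n x" and "single_one_at x a"
  shows "a < n" and "\<exists>J. J \<subseteq> {..<n} \<and> a \<notin> J \<and> x = Ebas a - (\<Sum>j\<in>J. Ebas j)"
proof -
  show "a < n"
    using assms unfolding in_Zn_def single_one_at_def by (metis not_le zero_neq_one)
  define J where "J = {j. j < n \<and> x j = -1}"
  have "x = Ebas a - (\<Sum>j\<in>J. Ebas j)"
  proof
    fix i
    have "(Ebas a - (\<Sum>j\<in>J. Ebas j)) i = (if i = a then 1 else 0) - (if i \<in> J then 1 else 0)"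
      unfolding sum_fun_apply Ebas_def J_def by simp
    also have "\<dots> = x i"
      using assms unfolding J_def in_Zn_def single_one_at_def by (cases "i < n") auto
    finally show "x i = (Ebas a - (\<Sum>j\<in>J. Ebas j)) i" by simp
  qed
  moreover have "J \<subseteq> {..<n}" and "a \<notin> J"
    using assms(2) unfolding J_def single_one_at_def by auto
  ultimately show "\<exists>J. J \<subseteq> {..<n} \<and> a \<notin> J \<and> x = Ebas a - (\<Sum>j\<in>J. Ebas j)"
    by blast
qed

lemma int_mult_succ_nonneg: "0 \<le> (z::int) * (z + 1)"
  by (cases "z \<ge> 0") (auto intro: mult_nonpos_nonpos)

lemma admissible_if_adjunction:
  assumes zx: "in_Zn n x" and adjunction: "Qn n x (Kvec n) + Qn n x x = -2"
  shows "admissible x"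
proof (cases "nonpos x")
  case False
  then obtain a where "x a \<ge> 1"
    unfolding nonpos_def by (auto simp: not_le int_one_le_iff_zero_less)
  with zx have "a < n"
    unfolding in_Zn_def by (metis not_le not_one_le_zero)
  have total: "(\<Sum>i<n. x i * (x i + 1)) = 2"
    using adjunction unfolding Qn_eq_uminus_dot dot_Kvec
    by (simp add: dot_def distrib_left sum.distrib)
  have split: "(\<Sum>i<n. x i * (x i + 1)) = x a * (x a + 1) + (\<Sum>i\<in>{..<n}-{a}. x i * (x i + 1))"
    using \<open>a < n\<close> by (simp add: sum.remove)
  have rest: "0 \<le> (\<Sum>i\<in>{..<n}-{a}. x i * (x i + 1))"
    by (intro sum_nonneg int_mult_succ_nonneg)
  have "x a = 1"
  proof (rule ccontr)
    assume "x a \<noteq> 1"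
    with \<open>x a \<ge> 1\<close> have "2 * 3 \<le> x a * (x a + 1)"
      by (intro mult_mono) auto
    with total split rest show False by linarith
  qed
  with total split have "(\<Sum>i\<in>{..<n}-{a}. x i * (x i + 1)) = 0"
    by simp
  then have "\<forall>i\<in>{..<n}-{a}. x i * (x i + 1) = 0"
    by (simp add: sum_nonneg_eq_0_iff int_mult_succ_nonneg)
  then have "x i = 0 \<or> x i = -1" if "i \<noteq> a" for i
    using zx that unfolding in_Zn_def by (cases "i < n") (auto simp: add_eq_0_iff)
  with \<open>x a = 1\<close> show ?thesis
    unfolding admissible_def single_one_at_def by blast
qed (simp add: admissible_def)

lemma nonpos_dot_nonneg: "nonpos x \<Longrightarrow> nonpos y \<Longrightarrow> 0 \<le> dot n x y"
  unfolding dot_def nonpos_def by (auto intro!: sum_nonneg mult_nonpos_nonpos)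

lemma nonpos_single_one_at_dot_ge:
  assumes "nonpos x" and "single_one_at y b"
  shows "(if b < n then x b else 0) \<le> dot n x y"
proof -
  have "(if b < n then x b else 0) = (\<Sum>i<n. if i = b then x b else 0)"
    by simp
  also have "\<dots> \<le> dot n x y"
    unfolding dot_def using assms unfolding nonpos_def single_one_at_def
    by (intro sum_mono) (auto intro: mult_nonpos_nonpos)
  finally show ?thesis .
qed

lemma nonpos_add:
  assumes x: "nonpos x" and y: "admissible y" and dot: "dot n x y \<le> -1"
  shows "nonpos (x + y)"
proof -
  have "\<not> nonpos y"
    using nonpos_dot_nonneg[OF x, of y n] dot by auto
  with y obtain b where b: "single_one_at y b"
    unfolding admissible_def by blast
  have "x b \<le> -1"
    using nonpos_single_one_at_dot_ge[OF x b, of n] dot by (auto split: if_splits)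
  show ?thesis
    unfolding nonpos_def
  proof
    fix i
    show "(x + y) i \<le> 0"
    proof (cases "i = b")
      case False
      then show ?thesis
        using x single_one_at_nonpos_off[OF b False] by (simp add: nonpos_def add_nonpos_nonpos)
    qed (use b \<open>x b \<le> -1\<close> in \<open>simp add: single_one_at_def\<close>)
  qed
qed

lemma single_one_at_add_cancel:
  assumes "single_one_at x a" and "single_one_at y b" and "a \<noteq> b"
    and "x b = -1" and "y a = -1"
  shows "nonpos (x + y)"
  unfolding nonpos_def
proof
  fix i
  show "(x + y) i \<le> 0"
    using assms single_one_at_nonpos_off[OF assms(1)] single_one_at_nonpos_off[OF assms(2)]
    by (cases "i = a"; cases "i = b") (auto simp: single_one_at_def add_nonpos_nonpos)
qed

lemma single_one_at_add_orthogonal: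
  assumes x: "single_one_at x a" and y: "single_one_at y b" and "a \<noteq> b"
    and "x b = -1" and "y a = 0" and orth: "\<And>i. i \<noteq> a \<Longrightarrow> i \<noteq> b \<Longrightarrow> x i * y i = 0"
  shows "single_one_at (x + y) a"
  unfolding single_one_at_def
proof (intro conjI allI impI)
  show "(x + y) a = 1"
    using x \<open>y a = 0\<close> unfolding single_one_at_def by simp
  fix i
  assume "i \<noteq> a"
  show "(x + y) i = 0 \<or> (x + y) i = -1"
  proof (cases "i = b")
    case False
    with orth \<open>i \<noteq> a\<close> have "x i * y i = 0"
      by blast
    with x y \<open>i \<noteq> a\<close> False show ?thesis
      unfolding single_one_at_def by fastforce
  qed (use y \<open>x b = -1\<close> in \<open>simp add: single_one_at_def\<close>)
qed

lemma single_one_at_mult_nonneg: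
  assumes "single_one_at x a" and "single_one_at y b" and "i \<noteq> a" and "i \<noteq> b"
  shows "0 \<le> x i * y i"
  using assms unfolding single_one_at_def by fastforce

lemma single_one_at_same_dot_nonneg:
  assumes x: "single_one_at x a" and y: "single_one_at y a"
  shows "0 \<le> dot n x y"
proof -
  have "0 \<le> x i * y i" for i
    using single_one_at_mult_nonneg[OF x y, of i] x y unfolding single_one_at_def
    by (cases "i = a") auto
  then show ?thesis
    unfolding dot_def by (simp add: sum_nonneg)
qed

lemma single_one_at_dot_split:
  assumes x: "single_one_at x a" and y: "single_one_at y b" and "a \<noteq> b" and "a < n" and "b < n"
  shows "dot n x y = y a + x b + (\<Sum>i\<in>{..<n}-{a}-{b}. x i * y i)"
proof -
  have "dot n x y = x a * y a + (\<Sum>i\<in>{..<n}-{a}. x i * y i)"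
    unfolding dot_def using \<open>a < n\<close> by (simp add: sum.remove)
  also have "(\<Sum>i\<in>{..<n}-{a}. x i * y i) = x b * y b + (\<Sum>i\<in>{..<n}-{a}-{b}. x i * y i)"
    using \<open>b < n\<close> \<open>a \<noteq> b\<close> by (subst sum.remove[of _ b]) auto
  finally show ?thesis
    using x y unfolding single_one_at_def by simp
qed

lemma single_one_at_add:
  assumes x: "single_one_at x a" and y: "single_one_at y b" and dot: "dot n x y \<le> -1"
    and zx: "in_Zn n x" and zy: "in_Zn n y"
  shows "admissible (x + y)"
proof -
  have "a \<noteq> b"
    using single_one_at_same_dot_nonneg[OF x, of y n] y dot by auto
  have "a < n" "b < n"
    using single_one_at_Ebas_form(1) x y zx zy by blast+
  define R where "R = (\<Sum>i\<in>{..<n}-{a}-{b}. x i * y i)"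
  have "0 \<le> R"
    unfolding R_def using single_one_at_mult_nonneg[OF x y] by (intro sum_nonneg) auto
  have split: "dot n x y = y a + x b + R"
    unfolding R_def by (rule single_one_at_dot_split[OF x y \<open>a \<noteq> b\<close> \<open>a < n\<close> \<open>b < n\<close>])
  have orth: "x i * y i = 0" if "y a + x b = -1" "i \<noteq> a" "i \<noteq> b" for i
  proof (cases "i < n")
    case True
    have "R = 0"
      using split dot that(1) \<open>0 \<le> R\<close> by linarith
    then have "\<forall>j\<in>{..<n}-{a}-{b}. x j * y j = 0"
      using single_one_at_mult_nonneg[OF x y] unfolding R_def
      by (subst (asm) sum_nonneg_eq_0_iff) auto
    with True that show ?thesis
      by blast
  qed (use zx in \<open>simp add: in_Zn_def\<close>)
  have "x b = 0 \<or> x b = -1" and "y a = 0 \<or> y a = -1"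
    using x y \<open>a \<noteq> b\<close> unfolding single_one_at_def by auto
  then consider "x b = -1" "y a = -1" | "x b = -1" "y a = 0" | "x b = 0" "y a = -1"
    using split dot \<open>0 \<le> R\<close> by linarith
  then show ?thesis
  proof cases
    case 1
    then show ?thesis
      using single_one_at_add_cancel[OF x y \<open>a \<noteq> b\<close>] by (simp add: admissible_def)
  next
    case 2
    then show ?thesis
      using single_one_at_add_orthogonal[OF x y \<open>a \<noteq> b\<close>] orth
      unfolding admissible_def by auto
  next
    case 3
    then have "single_one_at (y + x) b"
      using single_one_at_add_orthogonal[OF y x \<open>a \<noteq> b\<close>[symmetric]] orth
      by (simp add: mult.commute)
    then show ?thesis
      unfolding admissible_def by (auto simp: add.commute)
  qed
qed

lemma admissible_add:
  assumes x: "admissible x" and y: "admissible y" and dot: "dot n x y \<le> -1"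
    and "in_Zn n x" and "in_Zn n y"
  shows "admissible (x + y)"
proof -
  consider "nonpos x" | "nonpos y" | a b where "single_one_at x a" "single_one_at y b"
    using x y unfolding admissible_def by blast
  then show ?thesis
  proof cases
    case 1
    then show ?thesis
      using nonpos_add y dot unfolding admissible_def by blast
  next
    case 2
    then have "nonpos (y + x)"
      using nonpos_add x dot by (simp add: dot_commute)
    then show ?thesis
      unfolding admissible_def by (simp add: add.commute)
  qed (use single_one_at_add assms in blast)
qed

lemma rtrancl_exits_set:
  assumes "(x, y) \<in> R\<^sup>*" and "x \<in> S" and "y \<notin> S"
  shows "\<exists>s u. s \<in> S \<and> u \<notin> S \<and> (s, u) \<in> R"
  using assms by (induction rule: rtrancl_induct) auto

lemma connected_on_grow_induct:
  assumes "finite G" and conn: "connected_on Ed G" and "S\<^sub>0 \<subseteq> G" "S\<^sub>0 \<noteq> {}" "P S\<^sub>0"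
    and step: "\<And>S s u. S \<subseteq> G \<Longrightarrow> P S \<Longrightarrow> s \<in> S \<Longrightarrow> u \<in> G \<Longrightarrow> u \<notin> S \<Longrightarrow> adj Ed s u
      \<Longrightarrow> P (insert u S)"
  shows "P G"
proof -
  have "P G" if "card (G - S) = m" "S\<^sub>0 \<subseteq> S" "S \<subseteq> G" "P S" for m S
    using that
  proof (induction m arbitrary: S)
    case 0
    then show ?case
      using \<open>finite G\<close> by (metis Diff_eq_empty_iff card_0_eq finite_Diff subset_antisym)
  next
    case (Suc m)
    then obtain y where y: "y \<in> G" "y \<notin> S"
      by (metis Diff_eq_empty_iff card.empty nat.distinct(1) subsetI)
    obtain x where x: "x \<in> S\<^sub>0"
      using \<open>S\<^sub>0 \<noteq> {}\<close> by blast
    with Suc.prems conn y have "(x, y) \<in> {(a, b). a \<in> G \<and> b \<in> G \<and> adj Ed a b}\<^sup>*"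
      unfolding connected_on_def by blast
    with x y Suc.prems(2) obtain s u where su: "s \<in> S" "u \<in> G" "u \<notin> S" "adj Ed s u"
      using rtrancl_exits_set[of x y _ S] by blast
    have "card (G - insert u S) = m"
      using Suc.prems(1) su by (simp add: Diff_insert2[symmetric] card_Diff_singleton_if)
    with Suc.IH[of "insert u S"] Suc.prems su step show ?case
      by blast
  qed
  with assms show ?thesis
    by blast
qed

locale admissible_graph_embedding =
  fixes V :: "'v set" and Ed :: "'v set set" and \<phi> :: "'v \<Rightarrow> nat \<Rightarrow> int" and n :: nat
  assumes finite_V: "finite V"
    and in_Zn_vertex: "v \<in> V \<Longrightarrow> in_Zn n (\<phi> v)"
    and dot_vertices: "v \<in> V \<Longrightarrow> w \<in> V \<Longrightarrow> v \<noteq> w \<Longrightarrow>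
      dot n (\<phi> v) (\<phi> w) = (if adj Ed v w then -1 else 0)"
    and admissible_vertex: "v \<in> V \<Longrightarrow> admissible (\<phi> v)"
begin

lemma in_Zn_sum: "S \<subseteq> V \<Longrightarrow> in_Zn n (\<Sum>v\<in>S. \<phi> v)"
  using in_Zn_vertex unfolding in_Zn_def sum_fun_apply by (auto intro!: sum.neutral)

lemma dot_sum_vertex:
  assumes "S \<subseteq> V" and "u \<in> V" and "u \<notin> S"
  shows "dot n (\<Sum>v\<in>S. \<phi> v) (\<phi> u) = - int (card {s\<in>S. adj Ed s u})"
proof -
  have "dot n (\<Sum>v\<in>S. \<phi> v) (\<phi> u) = - (\<Sum>s\<in>S. of_bool (adj Ed s u))"
    unfolding dot_sum_left sum_negf[symmetric]
  proof (intro sum.cong refl)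
    fix s
    assume "s \<in> S"
    with assms have "s \<in> V" and "s \<noteq> u"
      by auto
    with assms(2) show "dot n (\<phi> s) (\<phi> u) = - of_bool (adj Ed s u)"
      by (simp add: dot_vertices)
  qed
  also have "\<dots> = - int (card {s\<in>S. adj Ed s u})"
    using finite_subset[OF assms(1) finite_V] by (simp add: Collect_conj_eq Int_commute)
  finally show ?thesis .
qed

lemma dot_sum_neighbour:
  assumes "S \<subseteq> V" and "u \<in> V" and "u \<notin> S" and "s \<in> S" and "adj Ed s u"
  shows "dot n (\<Sum>v\<in>S. \<phi> v) (\<phi> u) \<le> -1"
proof -
  have "card {s\<in>S. adj Ed s u} \<noteq> 0"
    using assms finite_subset[OF assms(1) finite_V] by auto
  then show ?thesis
    using dot_sum_vertex[OF assms(1-3)] by simp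
qed

lemma dot_sum_sum_neighbour:
  assumes "S \<subseteq> V" and "T \<subseteq> V" and "S \<inter> T = {}" and "s \<in> S" and "t \<in> T"
    and "adj Ed s t"
  shows "dot n (\<Sum>v\<in>S. \<phi> v) (\<Sum>v\<in>T. \<phi> v) \<le> -1"
proof -
  have "dot n (\<Sum>v\<in>S. \<phi> v) (\<Sum>v\<in>T. \<phi> v)
      = dot n (\<Sum>v\<in>S. \<phi> v) (\<phi> t) + (\<Sum>w\<in>T-{t}. dot n (\<Sum>v\<in>S. \<phi> v) (\<phi> w))"
    unfolding dot_sum_right using assms finite_subset[OF assms(2) finite_V]
    by (simp add: sum.remove)
  also have "\<dots> \<le> -1 + 0"
  proof (intro add_mono sum_nonpos)
    show "dot n (\<Sum>v\<in>S. \<phi> v) (\<phi> t) \<le> -1"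
      using assms by (intro dot_sum_neighbour) auto
    fix w
    assume "w \<in> T - {t}"
    with assms have "w \<in> V" and "w \<notin> S"
      by auto
    with assms(1) show "dot n (\<Sum>v\<in>S. \<phi> v) (\<phi> w) \<le> 0"
      by (simp add: dot_sum_vertex)
  qed
  finally show ?thesis
    by simp
qed

lemma sum_insert_vertex:
  "S \<subseteq> V \<Longrightarrow> u \<notin> S \<Longrightarrow> (\<Sum>v\<in>insert u S. \<phi> v) = (\<Sum>v\<in>S. \<phi> v) + \<phi> u"
  using finite_subset[OF _ finite_V] by (simp add: add.commute)

lemma admissible_sum_insert:
  assumes "S \<subseteq> V" and "u \<in> V" and "u \<notin> S" and "s \<in> S" and "adj Ed s u"
    and "admissible (\<Sum>v\<in>S. \<phi> v)"
  shows "admissible (\<Sum>v\<in>insert u S. \<phi> v)"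
  using admissible_add[OF assms(6) admissible_vertex dot_sum_neighbour in_Zn_sum in_Zn_vertex]
    assms by (simp add: sum_insert_vertex)

lemma nonpos_sum_insert:
  assumes "S \<subseteq> V" and "u \<in> V" and "u \<notin> S" and "s \<in> S" and "adj Ed s u"
    and "nonpos (\<Sum>v\<in>S. \<phi> v)"
  shows "nonpos (\<Sum>v\<in>insert u S. \<phi> v)"
  using nonpos_add[OF assms(6) admissible_vertex dot_sum_neighbour] assms
  by (simp add: sum_insert_vertex)

lemma admissible_sum_connected:
  assumes "G \<subseteq> V" and "connected_on Ed G"
  shows "admissible (\<Sum>v\<in>G. \<phi> v)"
proof -
  obtain x where "x \<in> G"
    using assms(2) unfolding connected_on_def by blast
  show ?thesis
  proof (rule connected_on_grow_induct[where S\<^sub>0 = "{x}"])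
    show "finite G"
      using assms(1) finite_V by (rule finite_subset)
    show "admissible (\<Sum>v\<in>{x}. \<phi> v)"
      using \<open>x \<in> G\<close> assms(1) admissible_vertex by auto
    fix S s u
    assume "S \<subseteq> G" "admissible (\<Sum>v\<in>S. \<phi> v)" "s \<in> S" "u \<in> G" "u \<notin> S" "adj Ed s u"
    with assms(1) show "admissible (\<Sum>v\<in>insert u S. \<phi> v)"
      using admissible_sum_insert[of S u s] by blast
  qed (use assms \<open>x \<in> G\<close> in auto)
qed

lemma not_both_nonpos_sums:
  assumes "connected_on Ed V" and "G\<^sub>1 \<subseteq> V" and "G\<^sub>2 \<subseteq> V" and "G\<^sub>1 \<inter> G\<^sub>2 = {}"
    and "G\<^sub>1 \<noteq> {}" and "G\<^sub>2 \<noteq> {}"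
    and "nonpos (\<Sum>v\<in>G\<^sub>1. \<phi> v)" and "nonpos (\<Sum>v\<in>G\<^sub>2. \<phi> v)"
  shows False
proof -
  have "V \<inter> G\<^sub>2 = {} \<and> nonpos (\<Sum>v\<in>V. \<phi> v)"
  proof (rule connected_on_grow_induct[where S\<^sub>0 = G\<^sub>1])
    fix S s u
    assume S: "S \<subseteq> V" "S \<inter> G\<^sub>2 = {} \<and> nonpos (\<Sum>v\<in>S. \<phi> v)"
      and su: "s \<in> S" "u \<in> V" "u \<notin> S" "adj Ed s u"
    show "insert u S \<inter> G\<^sub>2 = {} \<and> nonpos (\<Sum>v\<in>insert u S. \<phi> v)"
    proof (cases "u \<in> G\<^sub>2")
      case True
      have "dot n (\<Sum>v\<in>S. \<phi> v) (\<Sum>v\<in>G\<^sub>2. \<phi> v) \<le> -1"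
        using dot_sum_sum_neighbour S su True assms(3) by blast
      moreover have "0 \<le> dot n (\<Sum>v\<in>S. \<phi> v) (\<Sum>v\<in>G\<^sub>2. \<phi> v)"
        using nonpos_dot_nonneg S assms(8) by blast
      ultimately show ?thesis
        by simp
    qed (use S su nonpos_sum_insert[of S u s] in auto)
  qed (use assms finite_V in auto)
  with assms(3,6) show False
    by blast
qed

end

lemma admissible_graph_embedding_if_symplectic:
  assumes "finite V" and "symplectic_embedding V Ed d \<phi>"
  shows "admissible_graph_embedding V Ed \<phi> (card V)"
proof
  have emb: "\<And>v. v \<in> V \<Longrightarrow> in_Zn (card V) (\<phi> v)"
    "\<And>v w. v \<in> V \<Longrightarrow> w \<in> V \<Longrightarrow> v \<noteq> w \<Longrightarrow>
       - dot (card V) (\<phi> v) (\<phi> w) = (if adj Ed v w then 1 else 0)"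
    "\<And>v. v \<in> V \<Longrightarrow> Qn (card V) (\<phi> v) (Kvec (card V)) + Qn (card V) (\<phi> v) (\<phi> v) = -2"
    using assms(2) unfolding symplectic_embedding_def Let_def Qn_eq_uminus_dot[symmetric] by auto
  show "finite V"
    by (rule assms(1))
  fix v w
  show "v \<in> V \<Longrightarrow> in_Zn (card V) (\<phi> v)"
    by (rule emb(1))
  show "v \<in> V \<Longrightarrow> admissible (\<phi> v)"
    using emb(1,3) by (rule admissible_if_adjunction)
  assume "v \<in> V" "w \<in> V" "v \<noteq> w"
  then show "dot (card V) (\<phi> v) (\<phi> w) = (if adj Ed v w then -1 else 0)"
    using emb(2)[of v w] by (cases "adj Ed v w") auto
qed

theorem corollary3p5:
  fixes V :: "'v set" and Ed :: "'v set set" and d :: "'v \<Rightarrow> int"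
    and \<phi> :: "'v \<Rightarrow> nat \<Rightarrow> int" and G1 G2 :: "'v set"
  assumes "in_class_S V Ed d"
    and "symplectic_embedding V Ed d \<phi>"
    and "connected_subtree V Ed G1" and "connected_subtree V Ed G2"
    and "G1 \<inter> G2 = {}"
  shows "\<exists>k\<in>{G1, G2}. \<exists>a J. a < card V \<and> J \<subseteq> {..<card V} \<and> a \<notin> J \<and>
           (\<Sum>v\<in>k. \<phi> v) = Ebas a - (\<Sum>j\<in>J. Ebas j)"
proof -
  have "finite V" and "connected_on Ed V"
    using assms(1) unfolding in_class_S_def is_tree_def simple_graph_def by auto
  interpret admissible_graph_embedding V Ed \<phi> "card V"
    using \<open>finite V\<close> assms(2) by (rule admissible_graph_embedding_if_symplectic)
  have G: "G1 \<subseteq> V" "connected_on Ed G1" "G2 \<subseteq> V" "connected_on Ed G2"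
    using assms(3,4) unfolding connected_subtree_def by auto
  have "admissible (\<Sum>v\<in>G1. \<phi> v)" and "admissible (\<Sum>v\<in>G2. \<phi> v)"
    using G by (auto intro: admissible_sum_connected)
  moreover have "G1 \<noteq> {}" and "G2 \<noteq> {}"
    using G unfolding connected_on_def by auto
  then have "\<not> (nonpos (\<Sum>v\<in>G1. \<phi> v) \<and> nonpos (\<Sum>v\<in>G2. \<phi> v))"
    using not_both_nonpos_sums[OF \<open>connected_on Ed V\<close> G(1,3) assms(5)] by blast
  ultimately obtain k a where "k \<in> {G1, G2}" and "single_one_at (\<Sum>v\<in>k. \<phi> v) a"
    unfolding admissible_def by blast
  moreover have "in_Zn (card V) (\<Sum>v\<in>k. \<phi> v)"
    using \<open>k \<in> {G1, G2}\<close> G in_Zn_sum by auto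
  ultimately show ?thesis
    using single_one_at_Ebas_form[of "card V" "\<Sum>v\<in>k. \<phi> v" a] by blast
qed

end
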